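(* Let $G=\langle V,E\rangle$ be a directed graph in which every vertex has a self-loop, let $P=\{\pi_1,\ldots,\pi_n\}$ be a plan for $n$ agents in $G$, and let $D\in\mathbb{N}$. If the ACID instance $(G,P,D)$ is solvable, then the ACID instance $(G,P,D')$ with $D'=(n-1)\cdot\|P\|$ is also solvable.
   Context: A path in $G$ is a sequence of vertices $\pi=v_1v_2\ldots v_m$ with $(v_k,v_{k+1})\in E$ for all $1\le k<m$; its length is its number of steps $m-1$. Agent $i$ has a source $s_i$ and goal $g_i$; a plan $P=\{\pi_1,\ldots,\pi_n\}$ is a set of paths where $\pi_i$ goes from $s_i$ to $g_i$. The sum-of-costs $\|P\|$ is the sum of the lengths of the paths in $P$. Two paths $v_1\ldots v_k$ and $u_1\ldots u_k$ are non-colliding if for all $1\le j<k$: $v_j\neq u_j$ and $(v_j,v_{j+1})\neq(u_{j+1},u_j)$; if the paths have different lengths, the shorter one is extended by having its agent stay at its last vertex. A plan is non-colliding if every two of its paths are non-colliding. For $d\in\mathbb{N}$, a path $\pi'$ is a $d$-delay of $\pi=v_1\ldots v_m$ if $\pi'=v_1v_1^{k_1}v_2v_2^{k_2}\ldots v_mv_m^{k_m}$ with integers $k_i\ge0$, $\sum_i k_i=d$, where $v^{k}$ denotes $k$ additional repetitions of $v$. ACID (Avoiding Collisions by Introducing Delays): given $G$, a plan $P=\{\pi_1,\ldots,\pi_n\}$ and a budget $D\in\mathbb{N}$, the instance is solvable if there exist paths $\pi'_1,\ldots,\pi'_n$ with $\pi'_i$ a $d_i$-delay of $\pi_i$, $\sum_i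 d_i\le D$, and $\{\pi'_1,\ldots,\pi'_n\}$ non-colliding. *)

theory Defs
  imports Main
begin

definition is_path :: "'v set \<Rightarrow> ('v \<times> 'v) set \<Rightarrow> 'v list \<Rightarrow> bool" where
  "is_path V E p \<longleftrightarrow> p \<noteq> [] \<and> set p \<subseteq> V \<and>
     (\<forall>j. Suc j < length p \<longrightarrow> (p ! j, p ! Suc j) \<in> E)"

definition path_len :: "'v list \<Rightarrow> nat" where
  "path_len p = length p - 1"

definition soc :: "nat \<Rightarrow> (nat \<Rightarrow> 'v list) \<Rightarrow> nat" where
  "soc n P = (\<Sum>i<n. path_len (P i))"

definition is_delay :: "nat \<Rightarrow> 'v list \<Rightarrow> 'v list \<Rightarrow> bool" where
  "is_delay d p q \<longleftrightarrow> (\<exists>k :: nat \<Rightarrow> nat.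
      (\<Sum>j<length p. k j) = d \<and>
      q = concat (map (\<lambda>j. replicate (Suc (k j)) (p ! j)) [0..<length p]))"

definition pos :: "'v list \<Rightarrow> nat \<Rightarrow> 'v" where
  "pos p t = p ! min t (length p - 1)"

text \<open>Non-colliding paths (after extending the shorter one to the common length k):
  for all 1 \<le> j < k (here 0-based: j+1 < k), no vertex conflict and no swap conflict.\<close>
definition non_colliding :: "'v list \<Rightarrow> 'v list \<Rightarrow> bool" where
  "non_colliding p q \<longleftrightarrow> (\<forall>j. Suc j < max (length p) (length q) \<longrightarrow>
      pos p j \<noteq> pos q j \<and> (pos p j, pos p (Suc j)) \<noteq> (pos q (Suc j), pos q j))"

definition plan_non_colliding :: "nat \<Rightarrow> (nat \<Rightarrow> 'v list) \<Rightarrow> bool" where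
  "plan_non_colliding n P \<longleftrightarrow>
     (\<forall>i<n. \<forall>i'<n. i \<noteq> i' \<longrightarrow> non_colliding (P i) (P i'))"

text \<open>ACID instance (G, P, D) solvable (solvability does not depend on G).\<close>
definition acid_solvable :: "nat \<Rightarrow> (nat \<Rightarrow> 'v list) \<Rightarrow> nat \<Rightarrow> bool" where
  "acid_solvable n P D \<longleftrightarrow> (\<exists>P' :: nat \<Rightarrow> 'v list. \<exists>d :: nat \<Rightarrow> nat.
      (\<forall>i<n. is_delay (d i) (P i) (P' i)) \<and> (\<Sum>i<n. d i) \<le> D \<and>
      plan_non_colliding n P')"

end

theory Submission
  imports Defs
begin

(* Take a solution of minimal total delay.  In a d-delay of a path every time step either
   advances along the original path (a move) or repeats the current vertex (a wait); agent i
   makes |pi_i| moves and d_i waits.  If at some time step one agent waits and nobody moves,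
   deleting that step from every path keeps the plan non-colliding and lowers the delay,
   contradicting minimality.  Otherwise each wait of agent i happens at a move time of some
   agent, and these times together with agent i's own move times are at most ||P|| many, so
   d_i + |pi_i| <= ||P||; summing over i gives the bound (n - 1) ||P||. *)

(* A schedule of N time steps onto a path with m vertices: h s is the index of the vertex of the
   original path occupied at time s; each step either waits or moves on to the next vertex. *)
definition is_schedule :: "nat \<Rightarrow> nat \<Rightarrow> (nat \<Rightarrow> nat) \<Rightarrow> bool" where
  "is_schedule N m h \<longleftrightarrow> h 0 = 0 \<and> h (N - 1) = m - 1 \<and>
     (\<forall>s. Suc s < N \<longrightarrow> h (Suc s) = h s \<or> h (Suc s) = Suc (h s))"

lemma is_schedule_step:
  "is_schedule N m h \<Longrightarrow> Suc s < N \<Longrightarrow> h (Suc s) = h s \<or> h (Suc s) = Suc (h s)"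
  by (simp add: is_schedule_def)

lemma card_up_steps:
  assumes "\<forall>s<N. h (Suc s) = h s \<or> h (Suc s) = Suc (h s)"
  shows "card {s. s < N \<and> h (Suc s) = Suc (h s)} + h 0 = h N"
  using assms
proof (induction N)
  case (Suc N)
  have "{s. s < Suc N \<and> h (Suc s) = Suc (h s)} =
      (if h (Suc N) = Suc (h N) then insert N else id) {s. s < N \<and> h (Suc s) = Suc (h s)}"
    by (auto simp: less_Suc_eq)
  then show ?case using Suc by auto
qed simp

lemma card_schedule_moves:
  assumes "is_schedule N m h"
  shows "card {s. Suc s < N \<and> h (Suc s) = Suc (h s)} = m - 1"
proof -
  have "{s. Suc s < N \<and> h (Suc s) = Suc (h s)} = {s. s < N - 1 \<and> h (Suc s) = Suc (h s)}"
    by auto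
  then show ?thesis
    using assms card_up_steps[of "N - 1" h] by (simp add: is_schedule_def)
qed

lemma card_schedule_waits:
  assumes "is_schedule N m h" "0 < m"
  shows "card {s. Suc s < N \<and> h (Suc s) = h s} = N - m"
proof -
  let ?moves = "{s. Suc s < N \<and> h (Suc s) = Suc (h s)}"
  let ?waits = "{s. Suc s < N \<and> h (Suc s) = h s}"
  have "s \<in> ?moves \<union> ?waits \<longleftrightarrow> s < N - 1" for s
    using is_schedule_step[OF assms(1), of s] by auto
  then have partition: "?moves \<union> ?waits = {..<N - 1}" by blast
  have "card ?moves + card ?waits = card (?moves \<union> ?waits)"
    by (rule card_Un_disjoint[symmetric]) (auto intro: finite_subset[of _ "{..<N}"])
  also have "\<dots> = N - 1" by (simp add: partition)
  finally have "card ?moves + card ?waits = N - 1" .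
  moreover have "card ?moves = m - 1" using card_schedule_moves[OF assms(1)] .
  moreover have "N \<noteq> 0 \<or> m = 1" using assms by (auto simp: is_schedule_def)
  ultimately show ?thesis using assms(2) by linarith
qed

lemma is_schedule_wait_imp_less:
  assumes "is_schedule N m h" "0 < m" "Suc t < N" "h (Suc t) = h t"
  shows "m < N"
proof -
  let ?waits = "{s. Suc s < N \<and> h (Suc s) = h s}"
  have "t \<in> ?waits" using assms(3,4) by simp
  moreover have "finite ?waits" by (auto intro: finite_subset[of _ "{..<N}"])
  ultimately have "0 < card ?waits" by (auto simp: card_gt_0_iff)
  then show ?thesis using card_schedule_waits[OF assms(1,2)] by simp
qed

definition skip_index :: "nat \<Rightarrow> nat \<Rightarrow> nat" where
  "skip_index t s = (if s < t then s else Suc s)"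

lemma is_schedule_delete:
  assumes "is_schedule N m h" "Suc t < N" "h (Suc t) = h t"
  shows "is_schedule (N - 1) m (\<lambda>s. h (skip_index t s))"
proof -
  note step = is_schedule_step[OF assms(1)]
  have "h (skip_index t (Suc s)) = h (skip_index t s) \<or>
      h (skip_index t (Suc s)) = Suc (h (skip_index t s))" if "Suc s < N - 1" for s
  proof -
    consider "Suc s < t" | "Suc s = t" | "t \<le> s" by linarith
    then show ?thesis
      by cases (use that assms(3) step[of s] step[of "Suc s"] in \<open>auto simp: skip_index_def\<close>)
  qed
  moreover have "h (skip_index t 0) = 0" "h (skip_index t (N - 1 - 1)) = m - 1"
  proof -
    have "Suc (N - 1 - 1) = N - 1" "\<not> N - 1 - 1 < t" using assms(2) by linarith+
    then show "h (skip_index t (N - 1 - 1)) = m - 1" "h (skip_index t 0) = 0"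
      using assms by (auto simp: skip_index_def is_schedule_def)
  qed
  ultimately show ?thesis
    unfolding is_schedule_def by blast
qed

lemma is_schedule_extend:
  assumes "is_schedule L m h" "0 < L"
  shows "is_schedule (L + Suc k) (Suc m) (\<lambda>s. if s < L then h s else m)"
proof -
  let ?h = "\<lambda>s. if s < L then h s else m"
  have "?h (Suc s) = ?h s \<or> ?h (Suc s) = Suc (?h s)" if "Suc s < L + Suc k" for s
  proof -
    consider "Suc s < L" | "Suc s = L" | "L \<le> s" by linarith
    then show ?thesis
      by cases (use is_schedule_step[OF assms(1), of s] assms(1) in \<open>auto simp: is_schedule_def\<close>)
  qed
  then show ?thesis
    using assms by (auto simp: is_schedule_def)
qed

abbreviation stretch :: "(nat \<Rightarrow> nat) \<Rightarrow> 'v list \<Rightarrow> nat \<Rightarrow> 'v list" where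
  "stretch k p m \<equiv> concat (map (\<lambda>j. replicate (Suc (k j)) (p ! j)) [0..<m])"

lemma length_stretch: "length (stretch k p m) = m + (\<Sum>j<m. k j)"
  by (induction m) auto

lemma stretch_cong: "(\<And>j. j < m \<Longrightarrow> k j = k' j) \<Longrightarrow> stretch k p m = stretch k' p m"
  by (intro arg_cong[where f = concat] map_cong) auto

lemma stretch_eq_scheduled_map:
  assumes "0 < m"
  shows "\<exists>h. is_schedule (m + (\<Sum>j<m. k j)) m h \<and>
    stretch k p m = map (\<lambda>s. p ! h s) [0..<m + (\<Sum>j<m. k j)]"
  using assms
proof (induction m)
  case (Suc m)
  show ?case
  proof (cases "m = 0")
    case True
    then show ?thesis
      by (intro exI[of _ "\<lambda>_. 0"]) (simp add: is_schedule_def map_replicate_const)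
  next
    case False
    define L where "L = m + (\<Sum>j<m. k j)"
    from Suc False obtain h where h: "is_schedule L m h" "stretch k p m = map (\<lambda>s. p ! h s) [0..<L]"
      unfolding L_def by auto
    define h' where "h' = (\<lambda>s. if s < L then h s else m)"
    have "map (\<lambda>s. p ! h' s) [0..<L] = map (\<lambda>s. p ! h s) [0..<L]"
      by (rule map_cong) (auto simp: h'_def)
    moreover have "map (\<lambda>s. p ! h' s) [L..<L + Suc (k m)] = map (\<lambda>_. p ! m) [L..<L + Suc (k m)]"
      by (rule map_cong) (auto simp: h'_def)
    ultimately have "map (\<lambda>s. p ! h' s) [0..<L + Suc (k m)] =
        map (\<lambda>s. p ! h s) [0..<L] @ replicate (Suc (k m)) (p ! m)"
      by (simp add: upt_add_eq_append[of 0 L] map_replicate_const)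
    moreover have "is_schedule (L + Suc (k m)) (Suc m) h'"
      using is_schedule_extend[OF h(1)] False by (simp add: h'_def L_def)
    ultimately have "is_schedule (L + Suc (k m)) (Suc m) h' \<and>
        stretch k p (Suc m) = map (\<lambda>s. p ! h' s) [0..<L + Suc (k m)]"
      using h(2) by simp
    moreover have "Suc m + (\<Sum>j<Suc m. k j) = L + Suc (k m)" by (simp add: L_def)
    ultimately show ?thesis by metis
  qed
qed simp

lemma scheduled_map_eq_stretch:
  assumes "0 < N" "0 < m" "is_schedule N m h"
  shows "\<exists>k. map (\<lambda>s. p ! h s) [0..<N] = stretch k p m"
  using assms
proof (induction N arbitrary: m)
  case (Suc N)
  show ?case
  proof (cases "N = 0")
    case True
    with Suc.prems have "m = 1" by (auto simp: is_schedule_def)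
    with True Suc.prems(3) show ?thesis
      by (intro exI[of _ "\<lambda>_. 0"]) (simp add: is_schedule_def)
  next
    case False
    have "is_schedule N (Suc (h (N - 1))) h"
      using Suc.prems(3) by (simp add: is_schedule_def)
    with False Suc.IH obtain k where k: "map (\<lambda>s. p ! h s) [0..<N] = stretch k p (Suc (h (N - 1)))"
      by blast
    have last: "h N = m - 1" using Suc.prems(3) by (simp add: is_schedule_def)
    have "h N = h (N - 1) \<or> h N = Suc (h (N - 1))"
      using is_schedule_step[OF Suc.prems(3), of "N - 1"] False by simp
    then show ?thesis
    proof
      assume "h N = h (N - 1)"
      then have m: "m = Suc (h (N - 1))" using last Suc.prems(2) by simp
      define k' where "k' = k(m - 1 := Suc (k (m - 1)))"
      have "stretch k' p m = stretch k p m @ [p ! (m - 1)]"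
        using stretch_cong[of "m - 1" k' k p] m
        by (simp add: k'_def replicate_append_same[symmetric])
      then show ?thesis using k m last by (intro exI[of _ k']) simp
    next
      assume "h N = Suc (h (N - 1))"
      then have m: "m = Suc (Suc (h (N - 1)))" using last by simp
      define k' where "k' = k(m - 1 := 0)"
      have "stretch k' p m = stretch k p (m - 1) @ [p ! (m - 1)]"
        using stretch_cong[of "m - 1" k' k p] m by (simp add: k'_def)
      then show ?thesis using k m last by (intro exI[of _ k']) simp
    qed
  qed
qed simp

lemma is_delay_iff_schedule:
  assumes "p \<noteq> []"
  shows "is_delay d p q \<longleftrightarrow> (\<exists>h. is_schedule (length p + d) (length p) h \<and>
    q = map (\<lambda>s. p ! h s) [0..<length p + d])"
proof
  assume "is_delay d p q"
  then obtain k where "(\<Sum>j<length p. k j) = d" "q = stretch k p (length p)"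
    by (auto simp: is_delay_def)
  then show "\<exists>h. is_schedule (length p + d) (length p) h \<and> q = map (\<lambda>s. p ! h s) [0..<length p + d]"
    using stretch_eq_scheduled_map[of "length p" k p] assms by simp
next
  assume "\<exists>h. is_schedule (length p + d) (length p) h \<and> q = map (\<lambda>s. p ! h s) [0..<length p + d]"
  then obtain h where h: "is_schedule (length p + d) (length p) h"
    and q: "q = map (\<lambda>s. p ! h s) [0..<length p + d]" by blast
  then obtain k where k: "q = stretch k p (length p)"
    using scheduled_map_eq_stretch[OF _ _ h] assms by fastforce
  moreover have "length q = length p + d" using q by simp
  ultimately have "(\<Sum>j<length p. k j) = d"
    using length_stretch[of k p "length p"] by simp
  with k show "is_delay d p q" by (auto simp: is_delay_def)
qed

(* The guard keeps the final vertex: deleting it would change where the agent ends. *)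
definition delete_step :: "nat \<Rightarrow> 'v list \<Rightarrow> 'v list" where
  "delete_step t q = (if Suc t < length q then take t q @ drop (Suc t) q else q)"

lemma nth_take_drop_Suc:
  "Suc i < length q \<Longrightarrow> (take t q @ drop (Suc t) q) ! i = q ! skip_index t i"
  by (auto simp: skip_index_def nth_append)

lemma pos_delete_step: "pos (delete_step t q) s = pos q (skip_index t s)"
proof (cases "Suc t < length q")
  case True
  then have "min (skip_index t s) (length q - 1) = skip_index t (min s (length q - 1 - 1))"
    by (auto simp: skip_index_def min_def)
  with True show ?thesis
    by (simp add: pos_def delete_step_def nth_take_drop_Suc)
next
  case False
  then have "min (skip_index t s) (length q - 1) = min s (length q - 1)"
    by (auto simp: skip_index_def min_def)
  with False show ?thesis
    by (simp add: pos_def delete_step_def)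
qed

lemma pos_delete_step_Suc:
  assumes "pos q (Suc t) = pos q t"
  shows "pos (delete_step t q) (Suc s) = pos q (Suc (skip_index t s))"
proof (cases "Suc s = t")
  case True
  then show ?thesis using assms by (simp add: pos_delete_step skip_index_def)
qed (auto simp: pos_delete_step skip_index_def)

lemma Suc_skip_index_less_length:
  "Suc s < length (delete_step t q) \<Longrightarrow> Suc (skip_index t s) < length q"
  by (auto simp: delete_step_def skip_index_def split: if_splits)

lemma non_colliding_delete_step:
  assumes "non_colliding p q" "pos p (Suc t) = pos p t" "pos q (Suc t) = pos q t"
  shows "non_colliding (delete_step t p) (delete_step t q)"
  unfolding non_colliding_def
proof (intro allI impI)
  fix s assume "Suc s < max (length (delete_step t p)) (length (delete_step t q))"
  then have "Suc (skip_index t s) < max (length p) (length q)"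
    using Suc_skip_index_less_length by (metis less_max_iff_disj)
  then show "pos (delete_step t p) s \<noteq> pos (delete_step t q) s \<and>
      (pos (delete_step t p) s, pos (delete_step t p) (Suc s)) \<noteq>
      (pos (delete_step t q) (Suc s), pos (delete_step t q) s)"
    using assms(1) pos_delete_step_Suc[OF assms(2)] pos_delete_step_Suc[OF assms(3)]
    by (simp add: non_colliding_def pos_delete_step)
qed

lemma delete_step_map_upt:
  assumes "Suc t < N"
  shows "delete_step t (map f [0..<N]) = map (\<lambda>s. f (skip_index t s)) [0..<N - 1]"
  using assms by (intro nth_equalityI) (auto simp: delete_step_def skip_index_def nth_append)

lemma pos_Suc_eqI: "(Suc t < length q \<Longrightarrow> q ! Suc t = q ! t) \<Longrightarrow> pos q (Suc t) = pos q t"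
proof (cases "Suc t < length q")
  case False
  then have "min (Suc t) (length q - 1) = min t (length q - 1)" by linarith
  then show ?thesis by (simp add: pos_def)
qed (simp add: pos_def)

lemma is_delay_delete_step:
  assumes "p \<noteq> []" "is_schedule (length p + d) (length p) h"
    and "Suc t < length p + d" "h (Suc t) = h t"
  shows "is_delay (d - 1) p (delete_step t (map (\<lambda>s. p ! h s) [0..<length p + d]))"
proof -
  have "0 < d" using is_schedule_wait_imp_less[OF assms(2) _ assms(3,4)] assms(1) by simp
  then show ?thesis
    using is_schedule_delete[OF assms(2-4)] assms(1,3)
    by (auto simp: is_delay_iff_schedule delete_step_map_upt)
qed

lemma sum_card_le_pred_mult_sum_card:
  fixes A B :: "nat \<Rightarrow> 'a set"
  assumes "\<And>i. i < n \<Longrightarrow> finite (B i)" "\<And>i. i < n \<Longrightarrow> A i \<inter> B i = {}"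
    and "\<And>i. i < n \<Longrightarrow> A i \<subseteq> (\<Union>j<n. B j)"
  shows "(\<Sum>i<n. card (A i)) \<le> (n - 1) * (\<Sum>i<n. card (B i))"
proof -
  let ?U = "\<Union>j<n. B j"
  have fin: "finite ?U" using assms(1) by auto
  have "card (A i) + card (B i) \<le> card ?U" if "i < n" for i
  proof -
    have "card (A i) + card (B i) = card (A i \<union> B i)"
      using that assms finite_subset[OF _ fin] by (intro card_Un_disjoint[symmetric]) auto
    also have "\<dots> \<le> card ?U" using that assms(3) by (intro card_mono[OF fin]) auto
    finally show ?thesis .
  qed
  then have "(\<Sum>i<n. card (A i) + card (B i)) \<le> n * card ?U"
    using sum_mono[of "{..<n}" "\<lambda>i. card (A i) + card (B i)" "\<lambda>_. card ?U"] by simp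
  also have "\<dots> \<le> n * (\<Sum>i<n. card (B i))"
    using card_UN_le[of "{..<n}" B] by simp
  finally show ?thesis by (simp add: sum.distrib diff_mult_distrib)
qed

lemma exists_common_wait_step:
  assumes sched: "\<And>i. i < n \<Longrightarrow> is_schedule (N i) (m i) (H i)"
    and pos: "\<And>i. i < n \<Longrightarrow> 0 < m i"
    and large: "(n - 1) * (\<Sum>i<n. m i - 1) < (\<Sum>i<n. N i - m i)"
  obtains i t where "i < n" "Suc t < N i" "\<And>j. j < n \<Longrightarrow> Suc t < N j \<Longrightarrow> H j (Suc t) = H j t"
proof -
  define moves where "moves i = {s. Suc s < N i \<and> H i (Suc s) = Suc (H i s)}" for i
  define waits where "waits i = {s. Suc s < N i \<and> H i (Suc s) = H i s}" for i
  have "\<not> (\<forall>i<n. waits i \<subseteq> (\<Union>j<n. moves j))"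
  proof
    assume "\<forall>i<n. waits i \<subseteq> (\<Union>j<n. moves j)"
    moreover have "finite (moves i)" for i
      by (rule finite_subset[of _ "{..<N i}"]) (auto simp: moves_def)
    moreover have "waits i \<inter> moves i = {}" for i
      by (auto simp: moves_def waits_def)
    ultimately have "(\<Sum>i<n. card (waits i)) \<le> (n - 1) * (\<Sum>i<n. card (moves i))"
      by (intro sum_card_le_pred_mult_sum_card) auto
    moreover have "card (moves i) = m i - 1" "card (waits i) = N i - m i" if "i < n" for i
      using card_schedule_moves[OF sched[OF that]] card_schedule_waits[OF sched[OF that] pos[OF that]]
      by (simp_all add: moves_def waits_def)
    ultimately show False using large by simp
  qed
  then obtain i t where "i < n" "t \<in> waits i" "\<forall>j<n. t \<notin> moves j" by blast
  moreover have "H j (Suc t) = H j t" if "j < n" "Suc t < N j" "t \<notin> moves j" for j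
    using is_schedule_step[OF sched[OF that(1)] that(2)] that(2,3) by (auto simp: moves_def)
  ultimately show thesis using that by (auto simp: waits_def)
qed

lemma exists_solution_with_smaller_delay:
  assumes nonempty: "\<forall>i<n. P i \<noteq> []"
    and delay: "\<forall>i<n. is_delay (d i) (P i) (Q i)"
    and nc: "plan_non_colliding n Q"
    and large: "(n - 1) * soc n P < (\<Sum>i<n. d i)"
  obtains Q' d' where "\<forall>i<n. is_delay (d' i) (P i) (Q' i)" "(\<Sum>i<n. d' i) < (\<Sum>i<n. d i)"
    "plan_non_colliding n Q'"
proof -
  define N where "N i = length (P i) + d i" for i
  have "\<forall>i. \<exists>h. i < n \<longrightarrow> is_schedule (N i) (length (P i)) h \<and> Q i = map (\<lambda>s. P i ! h s) [0..<N i]"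
    using delay nonempty by (simp add: N_def is_delay_iff_schedule)
  then obtain H where sched: "\<And>i. i < n \<Longrightarrow> is_schedule (N i) (length (P i)) (H i)"
    and Q: "\<And>i. i < n \<Longrightarrow> Q i = map (\<lambda>s. P i ! H i s) [0..<N i]"
    by metis
  have "0 < length (P i)" if "i < n" for i using nonempty that by simp
  moreover have "(n - 1) * (\<Sum>i<n. length (P i) - 1) < (\<Sum>i<n. N i - length (P i))"
    using large by (simp add: N_def soc_def path_len_def)
  ultimately obtain i t where i: "i < n" "Suc t < N i"
    and wait: "\<And>j. j < n \<Longrightarrow> Suc t < N j \<Longrightarrow> H j (Suc t) = H j t"
    using exists_common_wait_step[of n N "\<lambda>i. length (P i)" H, OF sched] by blast
  define d' where "d' j = (if Suc t < N j then d j - 1 else d j)" for j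
  define Q' where "Q' j = delete_step t (Q j)" for j
  have "is_delay (d' j) (P j) (Q' j)" if "j < n" for j
  proof (cases "Suc t < N j")
    case True
    then show ?thesis
      using is_delay_delete_step[OF _ sched[OF that, unfolded N_def]] wait[OF that] nonempty Q that
      by (auto simp: d'_def Q'_def N_def)
  next
    case False
    then show ?thesis using delay Q that by (simp add: d'_def Q'_def delete_step_def)
  qed
  moreover have "(\<Sum>j<n. d' j) < (\<Sum>j<n. d j)"
  proof (rule sum_strict_mono_ex1)
    have "0 < d i"
      using is_schedule_wait_imp_less[OF sched[OF i(1)] _ i(2) wait[OF i]] i(1) nonempty
      by (simp add: N_def)
    then show "\<exists>j\<in>{..<n}. d' j < d j" using i by (intro bexI[of _ i]) (auto simp: d'_def)
  qed (auto simp: d'_def)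
  moreover have "pos (Q j) (Suc t) = pos (Q j) t" if "j < n" for j
    using wait[OF that] Q[OF that] by (intro pos_Suc_eqI) (simp add: N_def)
  then have "plan_non_colliding n Q'"
    using nc by (auto simp: plan_non_colliding_def Q'_def intro: non_colliding_delete_step)
  ultimately show thesis using that by blast
qed

lemma acid_solvable_pred_mult_soc:
  assumes "\<forall>i<n. P i \<noteq> []" "acid_solvable n P D"
  shows "acid_solvable n P ((n - 1) * soc n P)"
proof -
  obtain Q d where "\<forall>i<n. is_delay (d i) (P i) (Q i)" "plan_non_colliding n Q"
    using assms(2) by (auto simp: acid_solvable_def)
  then show ?thesis
  proof (induction "\<Sum>i<n. d i" arbitrary: Q d rule: less_induct)
    case less
    show ?case
    proof (cases "(\<Sum>i<n. d i) \<le> (n - 1) * soc n P")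
      case True
      with less.prems show ?thesis by (auto simp: acid_solvable_def)
    next
      case False
      with less.prems obtain Q' d' where "\<forall>i<n. is_delay (d' i) (P i) (Q' i)"
        "(\<Sum>i<n. d' i) < (\<Sum>i<n. d i)" "plan_non_colliding n Q'"
        using exists_solution_with_smaller_delay[OF assms(1)] by (metis not_le)
      then show ?thesis using less.hyps by blast
    qed
  qed
qed

theorem lemma1:
  fixes V :: "'v set" and E :: "('v \<times> 'v) set" and n :: nat
    and P :: "nat \<Rightarrow> 'v list" and D :: nat
  assumes "E \<subseteq> V \<times> V"
    and "\<forall>v\<in>V. (v, v) \<in> E"
    and "\<forall>i<n. is_path V E (P i)"
    and "acid_solvable n P D"
  shows "acid_solvable n P ((n - 1) * soc n P)"
  using acid_solvable_pred_mult_soc assms(3,4) by (auto simp: is_path_def)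

end
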